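(* Let $k\ge 3$ and let $G=G_1\ast G_2\ast\dots\ast G_k$ be a free product of freely indecomposable groups such that $G_i$ is not infinite cyclic for $i\ge 3$. Let $p\colon G\to G_1\ast G_2$ be the projection that is the identity on $G_1$ and $G_2$ and trivial on $G_3,\dots,G_k$. Then $\ker(p)$ is invariant under every automorphism in $\mathrm{Aut}^0(G)$.
   Context: A group is freely indecomposable if non-trivial and not a free product of two non-trivial groups. For a free product $G=G_1\ast\dots\ast G_k$, $\mathrm{Aut}^0(G)$ is the subgroup of $\mathrm{Aut}(G)$ generated by: factor automorphisms (apply an automorphism of one factor $G_i$ and fix all other factors); transvections (if $G_i=\langle v\rangle$ is infinite cyclic and $w\in G_j$ with $j\ne i$, send $v\mapsto vw$ or $v\mapsto wv$ and fix all other factors); partial conjugations (for $i\neq j$ and $g\in G_j$, conjugate every element of $G_i$ by $g$ and fix all other factors). *)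

theory Defs
  imports "HOL-Algebra.Algebra"
begin

text \<open>Internal free products: a group G is the free product of the subgroups H i (i in I)
  if every element of G is the product of a unique reduced word, i.e. a list of
  non-identity letters from the factors with consecutive letters in distinct factors.\<close>

definition reduced_word :: "'a monoid \<Rightarrow> nat set \<Rightarrow> (nat \<Rightarrow> 'a set) \<Rightarrow> (nat \<times> 'a) list \<Rightarrow> bool" where
  "reduced_word G I H ws \<longleftrightarrow>
     (\<forall>(i, x) \<in> set ws. i \<in> I \<and> x \<in> H i \<and> x \<noteq> \<one>\<^bsub>G\<^esub>) \<and>
     (\<forall>j. Suc j < length ws \<longrightarrow> fst (ws ! j) \<noteq> fst (ws ! Suc j))"

definition word_prod :: "'a monoid \<Rightarrow> (nat \<times> 'a) list \<Rightarrow> 'a" where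
  "word_prod G ws = foldr (\<lambda>(i, x) acc. x \<otimes>\<^bsub>G\<^esub> acc) ws \<one>\<^bsub>G\<^esub>"

definition is_free_product :: "'a monoid \<Rightarrow> nat set \<Rightarrow> (nat \<Rightarrow> 'a set) \<Rightarrow> bool" where
  "is_free_product G I H \<longleftrightarrow>
     group G \<and> (\<forall>i\<in>I. subgroup (H i) G) \<and>
     (\<forall>g\<in>carrier G. \<exists>!ws. reduced_word G I H ws \<and> word_prod G ws = g)"

definition freely_indecomposable :: "'a monoid \<Rightarrow> bool" where
  "freely_indecomposable G \<longleftrightarrow>
     group G \<and> carrier G \<noteq> {\<one>\<^bsub>G\<^esub>} \<and>
     \<not> (\<exists>A B. A \<noteq> {\<one>\<^bsub>G\<^esub>} \<and> B \<noteq> {\<one>\<^bsub>G\<^esub>} \<and>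
             is_free_product G {0, 1} (\<lambda>i. if i = 0 then A else B))"

definition infinite_cyclic_gen :: "'a monoid \<Rightarrow> 'a \<Rightarrow> bool" where
  "infinite_cyclic_gen G v \<longleftrightarrow> v \<in> carrier G \<and> carrier G = generate G {v} \<and> infinite (carrier G)"

definition factor_auts :: "'a monoid \<Rightarrow> nat set \<Rightarrow> (nat \<Rightarrow> 'a set) \<Rightarrow> ('a \<Rightarrow> 'a) set" where
  "factor_auts G I H = {\<phi> \<in> auto G. \<exists>i\<in>I. \<phi> ` H i = H i \<and>
      (\<forall>j\<in>I - {i}. \<forall>x\<in>H j. \<phi> x = x)}"

definition transvections :: "'a monoid \<Rightarrow> nat set \<Rightarrow> (nat \<Rightarrow> 'a set) \<Rightarrow> ('a \<Rightarrow> 'a) set" where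
  "transvections G I H = {\<phi> \<in> auto G. \<exists>i\<in>I. \<exists>j\<in>I. j \<noteq> i \<and>
      (\<exists>v w. infinite_cyclic_gen (G\<lparr>carrier := H i\<rparr>) v \<and> w \<in> H j \<and>
             (\<phi> v = v \<otimes>\<^bsub>G\<^esub> w \<or> \<phi> v = w \<otimes>\<^bsub>G\<^esub> v)) \<and>
      (\<forall>m\<in>I - {i}. \<forall>x\<in>H m. \<phi> x = x)}"

definition partial_conjugations :: "'a monoid \<Rightarrow> nat set \<Rightarrow> (nat \<Rightarrow> 'a set) \<Rightarrow> ('a \<Rightarrow> 'a) set" where
  "partial_conjugations G I H = {\<phi> \<in> auto G. \<exists>i\<in>I. \<exists>j\<in>I. j \<noteq> i \<and>
      (\<exists>g\<in>H j. \<forall>x\<in>H i. \<phi> x = inv\<^bsub>G\<^esub> g \<otimes>\<^bsub>G\<^esub> x \<otimes>\<^bsub>G\<^esub> g) \<and>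
      (\<forall>m\<in>I - {i}. \<forall>x\<in>H m. \<phi> x = x)}"

definition Aut0 :: "'a monoid \<Rightarrow> nat set \<Rightarrow> (nat \<Rightarrow> 'a set) \<Rightarrow> ('a \<Rightarrow> 'a) set" where
  "Aut0 G I H = generate (AutoGroup G)
      (factor_auts G I H \<union> transvections G I H \<union> partial_conjugations G I H)"

end

theory Submission
  imports Defs
begin

text \<open>Each generator \<open>\<phi>\<close> of \<open>Aut\<^sup>0(G)\<close> fixes all factors but one, \<open>G\<^sub>i\<close>, which it maps into
  the subgroup generated by \<open>G\<^sub>i\<close> and one further factor \<open>G\<^sub>j\<close>. If \<open>G\<^sub>i\<close> and \<open>G\<^sub>j\<close> are both kept
  by the projection \<open>p\<close>, then \<open>\<phi>\<close> commutes with \<open>p\<close>; otherwise \<open>p \<circ> \<phi> = p\<close>, because a transvection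
  can only move an infinite cyclic factor, and those are all kept. In both cases \<open>\<phi>\<close> maps
  \<open>ker p\<close> onto itself, and the automorphisms with this property form a subgroup.\<close>

lemma (in group) hom_eq_on_generate:
  assumes f: "f \<in> hom G G'" and h: "h \<in> hom G G'" and "group G'"
    and S: "S \<subseteq> carrier G" and eq: "\<And>x. x \<in> S \<Longrightarrow> f x = h x"
    and x: "x \<in> generate G S"
  shows "f x = h x"
proof -
  interpret f: group_hom G G' f
    using f \<open>group G'\<close> by (simp add: group_hom_def group_hom_axioms_def is_group)
  interpret h: group_hom G G' h
    using h \<open>group G'\<close> by (simp add: group_hom_def group_hom_axioms_def is_group)
  from x show ?thesis
  proof (induction rule: generate.induct)
    case one
    then show ?case by simp
  next
    case (incl y)
    then show ?case by (rule eq)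
  next
    case (inv y)
    then show ?case using S eq by (auto simp: f.hom_inv h.hom_inv)
  next
    case (eng y z)
    then have "y \<in> carrier G" "z \<in> carrier G" using generate_incl[OF S] by auto
    then show ?case using eng.IH by simp
  qed
qed

lemma kernel_image_eq_if_kernel_invariant:
  assumes bij: "bij_betw \<phi> (carrier G) (carrier G)"
    and invariant: "\<And>x. x \<in> carrier G \<Longrightarrow> f (\<phi> x) = \<one>\<^bsub>H\<^esub> \<longleftrightarrow> f x = \<one>\<^bsub>H\<^esub>"
  shows "\<phi> ` kernel G H f = kernel G H f"
proof
  show "\<phi> ` kernel G H f \<subseteq> kernel G H f"
    using bij invariant by (auto simp: kernel_def bij_betw_def)
  show "kernel G H f \<subseteq> \<phi> ` kernel G H f"
  proof
    fix y assume y: "y \<in> kernel G H f"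
    then obtain x where "x \<in> carrier G" "y = \<phi> x"
      using bij by (auto simp: kernel_def bij_betw_def)
    with y invariant show "y \<in> \<phi> ` kernel G H f" by (auto simp: kernel_def)
  qed
qed

lemma (in group) kernel_image_eq_if_commute:
  assumes \<phi>: "\<phi> \<in> auto G" and f: "f \<in> hom G G"
    and comm: "\<And>x. x \<in> carrier G \<Longrightarrow> f (\<phi> x) = \<phi> (f x)"
  shows "\<phi> ` kernel G G f = kernel G G f"
proof (rule kernel_image_eq_if_kernel_invariant)
  interpret \<phi>: group_hom G G \<phi>
    using \<phi> by (simp add: group_hom_def group_hom_axioms_def is_group auto_def)
  show bij: "bij_betw \<phi> (carrier G) (carrier G)"
    using \<phi> by (simp add: auto_def Bij_def)
  fix x assume x: "x \<in> carrier G"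
  have "\<phi> (f x) = \<phi> \<one> \<longleftrightarrow> f x = \<one>"
    using inj_on_eq_iff[OF bij_betw_imp_inj_on[OF bij] hom_in_carrier[OF f x] one_closed] .
  then show "f (\<phi> x) = \<one> \<longleftrightarrow> f x = \<one>"
    by (simp add: comm x)
qed

lemma (in group) subgroup_auto_stabiliser:
  assumes S: "S \<subseteq> carrier G"
  shows "subgroup {\<phi> \<in> auto G. \<phi> ` S = S} (AutoGroup G)"
proof (rule subgroup.intro)
  show "{\<phi> \<in> auto G. \<phi> ` S = S} \<subseteq> carrier (AutoGroup G)"
    by (auto simp: AutoGroup_def)
next
  fix \<phi> \<psi> assume "\<phi> \<in> {\<phi> \<in> auto G. \<phi> ` S = S}" "\<psi> \<in> {\<phi> \<in> auto G. \<phi> ` S = S}"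
  then have auto: "\<phi> \<in> auto G" "\<psi> \<in> auto G" and image: "\<phi> ` S = S" "\<psi> ` S = S"
    by simp_all
  have "\<phi> \<otimes>\<^bsub>AutoGroup G\<^esub> \<psi> \<in> auto G"
    using subgroup.m_closed[OF subgroup_auto auto] by (simp add: AutoGroup_def)
  moreover have "\<phi> \<otimes>\<^bsub>AutoGroup G\<^esub> \<psi> = compose (carrier G) \<phi> \<psi>"
    using auto by (simp add: AutoGroup_def BijGroup_def auto_def)
  moreover have "compose (carrier G) \<phi> \<psi> ` S = \<phi> ` \<psi> ` S"
    using S by (auto simp: compose_def image_comp intro!: image_cong)
  ultimately show "\<phi> \<otimes>\<^bsub>AutoGroup G\<^esub> \<psi> \<in> {\<phi> \<in> auto G. \<phi> ` S = S}"
    using image by simp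
next
  show "\<one>\<^bsub>AutoGroup G\<^esub> \<in> {\<phi> \<in> auto G. \<phi> ` S = S}"
    using S id_in_auto by (auto simp: AutoGroup_def BijGroup_def)
next
  fix \<phi> assume "\<phi> \<in> {\<phi> \<in> auto G. \<phi> ` S = S}"
  then have auto: "\<phi> \<in> auto G" and image: "\<phi> ` S = S"
    by simp_all
  have inv: "inv\<^bsub>AutoGroup G\<^esub> \<phi> = inv\<^bsub>BijGroup (carrier G)\<^esub> \<phi>"
    using group.m_inv_consistent[OF group_BijGroup subgroup_auto auto] by (simp add: AutoGroup_def)
  have "inv\<^bsub>AutoGroup G\<^esub> \<phi> \<in> auto G"
    unfolding inv using subgroup.m_inv_closed[OF subgroup_auto auto] .
  moreover have "(inv\<^bsub>AutoGroup G\<^esub> \<phi>) ` S = S"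
  proof -
    have "(inv\<^bsub>AutoGroup G\<^esub> \<phi>) ` S = inv_into (carrier G) \<phi> ` \<phi> ` S"
      using auto S image by (auto simp: inv inv_BijGroup auto_def intro!: image_cong)
    also have "\<dots> = S"
      using auto S by (simp add: auto_def Bij_def bij_betw_def)
    finally show ?thesis .
  qed
  ultimately show "inv\<^bsub>AutoGroup G\<^esub> \<phi> \<in> {\<phi> \<in> auto G. \<phi> ` S = S}"
    by simp
qed

lemma word_prod_Cons [simp]: "word_prod G ((i, x) # ws) = x \<otimes>\<^bsub>G\<^esub> word_prod G ws"
  by (simp add: word_prod_def)

lemma is_free_product_generate:
  assumes "is_free_product G I H"
  shows "carrier G = generate G (\<Union>i\<in>I. H i)"
proof -
  have G: "group G" and sub: "\<And>i. i \<in> I \<Longrightarrow> subgroup (H i) G"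
    using assms by (auto simp: is_free_product_def)
  have factors: "(\<Union>i\<in>I. H i) \<subseteq> carrier G"
    using sub subgroup.subset by blast
  have "word_prod G ws \<in> generate G (\<Union>i\<in>I. H i)" if "reduced_word G I H ws" for ws
    using that
  proof (induction ws)
    case Nil
    then show ?case by (simp add: word_prod_def generate.one)
  next
    case (Cons a ws)
    obtain i x where a: "a = (i, x)" by fastforce
    with Cons.prems have "i \<in> I" "x \<in> H i" "reduced_word G I H ws"
      by (auto simp: reduced_word_def)
    then show ?case
      using Cons.IH a by (auto intro: generate.eng generate.incl)
  qed
  then have "carrier G \<subseteq> generate G (\<Union>i\<in>I. H i)"
    using assms by (force simp: is_free_product_def)
  then show ?thesis
    using group.generate_incl[OF G factors] by blast
qed

locale free_factor_projection =
  fixes G :: "'a monoid" (structure) and I :: "nat set" and H :: "nat \<Rightarrow> 'a set"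
    and J :: "nat set" and p :: "'a \<Rightarrow> 'a"
  assumes free_product: "is_free_product G I H"
    and p_hom: "p \<in> hom G G"
    and p_kept: "\<And>j x. j \<in> J \<Longrightarrow> x \<in> H j \<Longrightarrow> p x = x"
    and p_killed: "\<And>i x. i \<in> I - J \<Longrightarrow> x \<in> H i \<Longrightarrow> p x = \<one>"
begin

sublocale group G
  using free_product by (simp add: is_free_product_def)

sublocale p: group_hom G G p
  using p_hom by (simp add: group_hom_def group_hom_axioms_def is_group)

lemma factor_subgroup: "i \<in> I \<Longrightarrow> subgroup (H i) G"
  using free_product by (simp add: is_free_product_def)

lemma factor_subset: "i \<in> I \<Longrightarrow> H i \<subseteq> carrier G"
  using factor_subgroup subgroup.subset by blast

lemma hom_eq_if_eq_on_factors:
  assumes "f \<in> hom G G" "h \<in> hom G G"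
    and "\<And>i x. i \<in> I \<Longrightarrow> x \<in> H i \<Longrightarrow> f x = h x"
    and "x \<in> carrier G"
  shows "f x = h x"
  using hom_eq_on_generate[OF assms(1,2) is_group, of "\<Union>i\<in>I. H i"] assms(3,4)
    factor_subset is_free_product_generate[OF free_product] by blast

lemma kernel_image_eq_if_p_comp_eq:
  assumes \<phi>: "\<phi> \<in> auto G" and "i \<in> I"
    and fix_others: "\<And>m x. m \<in> I - {i} \<Longrightarrow> x \<in> H m \<Longrightarrow> \<phi> x = x"
    and eq: "\<And>x. x \<in> H i \<Longrightarrow> p (\<phi> x) = p x"
  shows "\<phi> ` kernel G G p = kernel G G p"
proof (rule kernel_image_eq_if_kernel_invariant)
  show "bij_betw \<phi> (carrier G) (carrier G)"
    using \<phi> by (simp add: auto_def Bij_def)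
  have "p \<circ> \<phi> \<in> hom G G"
    using \<phi> p_hom by (auto simp: auto_def intro: Group.hom_compose)
  moreover have "(p \<circ> \<phi>) y = p y" if "m \<in> I" "y \<in> H m" for m y
    using that fix_others eq by (cases "m = i") auto
  ultimately have "(p \<circ> \<phi>) x = p x" if "x \<in> carrier G" for x
    using hom_eq_if_eq_on_factors[OF _ p_hom _ that] by blast
  then show "p (\<phi> x) = \<one> \<longleftrightarrow> p x = \<one>" if "x \<in> carrier G" for x
    using that by simp
qed

lemma kernel_image_eq_if_p_fixes_image:
  assumes \<phi>: "\<phi> \<in> auto G" and "i \<in> J"
    and fix_others: "\<And>m x. m \<in> I - {i} \<Longrightarrow> x \<in> H m \<Longrightarrow> \<phi> x = x"
    and fixed: "\<And>x. x \<in> H i \<Longrightarrow> p (\<phi> x) = \<phi> x"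
  shows "\<phi> ` kernel G G p = kernel G G p"
proof (rule kernel_image_eq_if_commute[OF \<phi> p_hom])
  interpret \<phi>: group_hom G G \<phi>
    using \<phi> by (simp add: group_hom_def group_hom_axioms_def is_group auto_def)
  have "p \<circ> \<phi> \<in> hom G G" "\<phi> \<circ> p \<in> hom G G"
    using Group.hom_compose[OF \<phi>.homh p_hom] Group.hom_compose[OF p_hom \<phi>.homh] by auto
  moreover have "p (\<phi> x) = \<phi> (p x)" if "m \<in> I" "x \<in> H m" for m x
    using that \<open>i \<in> J\<close> fix_others fixed p_kept p_killed by (cases "m \<in> J"; cases "m = i") auto
  ultimately show "p (\<phi> x) = \<phi> (p x)" if "x \<in> carrier G" for x
    using hom_eq_if_eq_on_factors[of "p \<circ> \<phi>" "\<phi> \<circ> p", OF _ _ _ that] by simp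
qed

lemma factor_aut_kernel_image_eq:
  assumes "\<phi> \<in> factor_auts G I H"
  shows "\<phi> ` kernel G G p = kernel G G p"
proof -
  obtain i where \<phi>: "\<phi> \<in> auto G" and "i \<in> I" and factor_image: "\<phi> ` H i = H i"
    and fix_others: "\<And>m x. m \<in> I - {i} \<Longrightarrow> x \<in> H m \<Longrightarrow> \<phi> x = x"
    using assms by (auto simp: factor_auts_def)
  have image_in_factor: "\<phi> x \<in> H i" if "x \<in> H i" for x
    using that factor_image by blast
  show ?thesis
  proof (cases "i \<in> J")
    case True
    then show ?thesis
      using kernel_image_eq_if_p_fixes_image[OF \<phi> True fix_others] p_kept[OF True] image_in_factor
      by simp
  next
    case False
    with \<open>i \<in> I\<close> have "i \<in> I - J" by simp
    then show ?thesis
      using kernel_image_eq_if_p_comp_eq[OF \<phi> \<open>i \<in> I\<close> fix_others] p_killed image_in_factor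
      by simp
  qed
qed

lemma transvection_kernel_image_eq:
  assumes "\<phi> \<in> transvections G I H"
    and not_cyclic: "\<And>i v. i \<in> I - J \<Longrightarrow> \<not> infinite_cyclic_gen (G\<lparr>carrier := H i\<rparr>) v"
  shows "\<phi> ` kernel G G p = kernel G G p"
proof -
  obtain i j v w where \<phi>: "\<phi> \<in> auto G" and "i \<in> I" "j \<in> I"
    and cyclic: "infinite_cyclic_gen (G\<lparr>carrier := H i\<rparr>) v" and "w \<in> H j"
    and \<phi>_v: "\<phi> v = v \<otimes> w \<or> \<phi> v = w \<otimes> v"
    and fix_others: "\<And>m x. m \<in> I - {i} \<Longrightarrow> x \<in> H m \<Longrightarrow> \<phi> x = x"
    using assms(1) by (auto simp: transvections_def)
  have "i \<in> J" using not_cyclic cyclic \<open>i \<in> I\<close> by blast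
  have "v \<in> H i" and H_i: "H i = generate G {v}"
    using cyclic generate_consistent[of "{v}" "H i"] factor_subgroup[OF \<open>i \<in> I\<close>]
    by (auto simp: infinite_cyclic_gen_def)
  have v: "v \<in> carrier G" and w: "w \<in> carrier G"
    using \<open>v \<in> H i\<close> \<open>w \<in> H j\<close> factor_subset \<open>i \<in> I\<close> \<open>j \<in> I\<close> by auto
  have \<phi>_hom: "\<phi> \<in> hom G G" using \<phi> by (simp add: auto_def)
  have eq_on_factor: "f x = h x"
    if "f \<in> hom G G" "h \<in> hom G G" "f v = h v" "x \<in> H i" for f h x
    using hom_eq_on_generate[OF that(1,2) is_group, of "{v}"] v that(3,4) H_i by blast
  show ?thesis
  proof (cases "j \<in> J")
    case True
    have "p v = v" "p w = w"
      using p_kept[OF \<open>i \<in> J\<close> \<open>v \<in> H i\<close>] p_kept[OF True \<open>w \<in> H j\<close>] .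
    with \<phi>_v have "(p \<circ> \<phi>) v = \<phi> v"
      by (elim disjE) (simp_all add: v w)
    from eq_on_factor[OF Group.hom_compose[OF \<phi>_hom p_hom] \<phi>_hom this, unfolded comp_apply]
    show ?thesis
      by (intro kernel_image_eq_if_p_fixes_image[OF \<phi> \<open>i \<in> J\<close> fix_others]) simp
  next
    case False
    with \<open>j \<in> I\<close> have "p w = \<one>"
      using p_killed \<open>w \<in> H j\<close> by blast
    with \<phi>_v have "(p \<circ> \<phi>) v = p v"
      by (elim disjE) (simp_all add: v w)
    from eq_on_factor[OF Group.hom_compose[OF \<phi>_hom p_hom] p_hom this, unfolded comp_apply]
    show ?thesis
      by (intro kernel_image_eq_if_p_comp_eq[OF \<phi> \<open>i \<in> I\<close> fix_others]) simp
  qed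
qed

lemma partial_conjugation_kernel_image_eq:
  assumes "\<phi> \<in> partial_conjugations G I H"
  shows "\<phi> ` kernel G G p = kernel G G p"
proof -
  obtain i j g where \<phi>: "\<phi> \<in> auto G" and "i \<in> I" "j \<in> I" and "g \<in> H j"
    and conj: "\<And>x. x \<in> H i \<Longrightarrow> \<phi> x = inv g \<otimes> x \<otimes> g"
    and fix_others: "\<And>m x. m \<in> I - {i} \<Longrightarrow> x \<in> H m \<Longrightarrow> \<phi> x = x"
    using assms by (auto simp: partial_conjugations_def)
  have g: "g \<in> carrier G"
    using \<open>g \<in> H j\<close> factor_subset \<open>j \<in> I\<close> by auto
  have p_conj: "p (\<phi> x) = inv (p g) \<otimes> p x \<otimes> p g" if "x \<in> H i" for x
  proof -
    have "x \<in> carrier G" using that factor_subset \<open>i \<in> I\<close> by blast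
    then show ?thesis using conj[OF that] g by (simp add: p.hom_inv)
  qed
  show ?thesis
  proof (cases "i \<in> J \<and> j \<in> J")
    case True
    then have "p (\<phi> x) = \<phi> x" if "x \<in> H i" for x
      using p_conj[OF that] conj[OF that] p_kept[of i x] p_kept[of j g] that \<open>g \<in> H j\<close> by simp
    with True show ?thesis
      by (intro kernel_image_eq_if_p_fixes_image[OF \<phi> _ fix_others]) auto
  next
    case False
    then have "p (\<phi> x) = p x" if "x \<in> H i" for x
    proof (cases "i \<in> J")
      case True
      with False \<open>j \<in> I\<close> have "p g = \<one>"
        using p_killed \<open>g \<in> H j\<close> by blast
      then show ?thesis
        using p_conj[OF that] subsetD[OF factor_subset[OF \<open>i \<in> I\<close>] that] by simp
    next
      case False
      with \<open>i \<in> I\<close> have "p x = \<one>"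
        using p_killed that by blast
      then show ?thesis
        using p_conj[OF that] g by simp
    qed
    from kernel_image_eq_if_p_comp_eq[OF \<phi> \<open>i \<in> I\<close> fix_others this]
    show ?thesis .
  qed
qed

lemma Aut0_kernel_image_eq:
  assumes not_cyclic: "\<And>i v. i \<in> I - J \<Longrightarrow> \<not> infinite_cyclic_gen (G\<lparr>carrier := H i\<rparr>) v"
    and "\<phi> \<in> Aut0 G I H"
  shows "\<phi> ` kernel G G p = kernel G G p"
proof -
  let ?Stab = "{\<phi> \<in> auto G. \<phi> ` kernel G G p = kernel G G p}"
  have "subgroup ?Stab (AutoGroup G)"
    by (rule subgroup_auto_stabiliser) (auto simp: kernel_def)
  moreover have "factor_auts G I H \<union> transvections G I H \<union> partial_conjugations G I H \<subseteq> ?Stab"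
  proof (intro subsetI CollectI conjI)
    fix \<psi> assume \<psi>: "\<psi> \<in> factor_auts G I H \<union> transvections G I H \<union> partial_conjugations G I H"
    then show "\<psi> \<in> auto G"
      by (auto simp: factor_auts_def transvections_def partial_conjugations_def)
    from \<psi> show "\<psi> ` kernel G G p = kernel G G p"
      using factor_aut_kernel_image_eq transvection_kernel_image_eq[OF _ not_cyclic]
        partial_conjugation_kernel_image_eq
      by blast
  qed
  ultimately have "Aut0 G I H \<subseteq> ?Stab"
    unfolding Aut0_def by (rule group.generate_subgroup_incl[OF AutoGroup, rotated])
  then show ?thesis
    using assms(2) by blast
qed

end

theorem lemma5p2:
  fixes G :: "'a monoid" and H :: "nat \<Rightarrow> 'a set" and k :: nat
    and p :: "'a \<Rightarrow> 'a" and \<phi> :: "'a \<Rightarrow> 'a"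
  assumes "k \<ge> 3"
    and "is_free_product G {1..k} H"
    and "\<forall>i\<in>{1..k}. freely_indecomposable (G\<lparr>carrier := H i\<rparr>)"
    and "\<forall>i\<in>{3..k}. \<not> (\<exists>v. infinite_cyclic_gen (G\<lparr>carrier := H i\<rparr>) v)"
    and "p \<in> hom G (G\<lparr>carrier := generate G (H 1 \<union> H 2)\<rparr>)"
    and "\<forall>x\<in>H 1 \<union> H 2. p x = x"
    and "\<forall>i\<in>{3..k}. \<forall>x\<in>H i. p x = \<one>\<^bsub>G\<^esub>"
    and "\<phi> \<in> Aut0 G {1..k} H"
  shows "\<phi> ` kernel G G p = kernel G G p"
proof -
  have G: "group G" and factors: "\<And>i. i \<in> {1..k} \<Longrightarrow> subgroup (H i) G"
    using assms(2) by (auto simp: is_free_product_def)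
  have "H 1 \<union> H 2 \<subseteq> carrier G"
    using factors[of 1] factors[of 2] assms(1) subgroup.subset by force
  then have "generate G (H 1 \<union> H 2) \<subseteq> carrier G"
    by (rule group.generate_incl[OF G])
  then have "p \<in> hom G G"
    using assms(5) by (auto simp: hom_def)
  then interpret free_factor_projection G "{1..k}" H "{1, 2}" p
    using assms(2,6,7) by unfold_locales auto
  show ?thesis
    using Aut0_kernel_image_eq assms(4,8) by auto
qed

end
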